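(* Let $m\ge 2$, let $A=(A(i,j))_{i,j=0}^{m-1}$ be a primitive matrix with entries in $\{0,1\}$, and let $q>1$. Then there exists a unique vector $(t_i)_{i=0}^{m-1}$ satisfying $$t_i^q = \sum_{j=0}^{m-1} A(i,j)\, t_j,\qquad t_i>1,\qquad i=0,\dots,m-1.$$
   Context: A non-negative matrix is primitive if some power of it has all entries strictly positive. *)

theory Defs
  imports "HOL-Analysis.Analysis"
begin

text \<open>Matrix power of a square matrix (index type 'n plays the role of {0..m-1}).\<close>
primrec matrix_pow :: "real^'n^'n \<Rightarrow> nat \<Rightarrow> real^'n^'n" where
  "matrix_pow A 0 = mat 1"
| "matrix_pow A (Suc k) = A ** matrix_pow A k"

definition primitive_matrix :: "real^'n^'n \<Rightarrow> bool" where
  "primitive_matrix A \<longleftrightarrow> (\<forall>i j. A $ i $ j \<ge> 0) \<and>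
     (\<exists>k. \<forall>i j. matrix_pow A k $ i $ j > 0)"

end

theory Submission
  imports Defs
begin

(*
  Existence: on the box [1, M]^n (with M^(q-1) = n) the map
  F t = ((A t)_i^(1/q))_i is monotone and maps the box into itself, because every
  row of A contains an entry 1.  Since real^'n is a conditionally complete lattice,
  the Knaster-Tarski argument gives a fixed point u >= 1.  To see u > 1, let Z be
  the set of indices with u_i = 1: each row i in Z must be a unit vector pointing
  back into Z, so the same holds for every power of A, which contradicts
  primitivity when there are at least two indices.

  Uniqueness: for two positive solutions s, t let c be the maximal ratio s_i/t_i,
  attained at i0; then c^q t_i0^q = s_i0^q <= c t_i0^q, hence c <= 1 as q > 1.
*)

text \<open>Knaster-Tarski for a monotone self-map of an interval in a conditionally
  complete lattice: the supremum of all post-fixed points is a fixed point.\<close>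

lemma interval_monotone_fixpoint:
  fixes F :: "'a::conditionally_complete_lattice \<Rightarrow> 'a"
  assumes mono: "mono_on {a..b} F" and maps: "F ` {a..b} \<subseteq> {a..b}" and "a \<le> b"
  shows "\<exists>u\<in>{a..b}. F u = u"
proof -
  define T where "T = {t\<in>{a..b}. t \<le> F t}"
  let ?u = "Sup T"
  have "F a \<in> {a..b}" using maps \<open>a \<le> b\<close> by (auto simp: image_subset_iff)
  then have aT: "a \<in> T"
    using \<open>a \<le> b\<close> unfolding T_def by auto
  have bdd: "bdd_above T"
    unfolding T_def by (auto intro: bdd_aboveI[of _ b])
  have upper: "t \<le> ?u" if "t \<in> T" for t
    using that bdd by (rule cSup_upper)
  have u_box: "?u \<in> {a..b}"
    using upper[OF aT] aT unfolding T_def by (auto intro: cSup_least)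
  have u_le_Fu: "?u \<le> F ?u"
  proof (rule cSup_least)
    show "T \<noteq> {}" using aT by blast
    fix t assume t: "t \<in> T"
    then have "F t \<le> F ?u"
      using u_box upper[OF t] by (intro mono_onD[OF mono]) (auto simp: T_def)
    then show "t \<le> F ?u" using t unfolding T_def by auto
  qed
  have Fu_box: "F ?u \<in> {a..b}" using maps u_box by blast
  have "F ?u \<le> F (F ?u)"
    using mono u_box Fu_box u_le_Fu by (rule mono_onD)
  then have "F ?u \<le> ?u"
    using Fu_box by (intro upper) (simp add: T_def)
  then show ?thesis
    using u_box u_le_Fu by (intro bexI[of _ ?u]) auto
qed

lemma nonneg_matrix_vector_mono:
  fixes A :: "real^'n^'m"
  assumes "\<forall>i j. A $ i $ j \<ge> 0" and "s \<le> t"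
  shows "A *v s \<le> A *v t"
  using assms unfolding less_eq_vec_def
  by (auto simp: matrix_vector_mult_def intro!: sum_mono mult_left_mono)

lemma nonneg_matrix_vector_term_le:
  fixes A :: "real^'n^'m"
  assumes "\<forall>i j. A $ i $ j \<ge> 0" and "\<forall>j. t $ j \<ge> 0"
  shows "A $ i $ j * t $ j \<le> (A *v t) $ i"
  unfolding matrix_vector_mult_def vec_lambda_beta
  by (rule member_le_sum) (use assms in auto)

lemma exists_other_index:
  assumes "CARD('n::finite) \<ge> 2"
  shows "\<exists>j::'n. j \<noteq> i"
proof (rule ccontr)
  assume "\<not> ?thesis"
  then have "(UNIV::'n set) = {i}" by auto
  then have "card (UNIV::'n set) = card {i}" by (rule arg_cong)
  then show False using assms by simp
qed

text \<open>With at least two indices, a primitive matrix has no zero row: a zero row of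
  A is a zero row of every positive power, and the power 0 is the identity.\<close>

lemma primitive_row_nonzero:
  fixes A :: "real^'n^'n"
  assumes "primitive_matrix A" and "CARD('n) \<ge> 2"
  shows "\<exists>j. A $ i $ j \<noteq> 0"
proof (rule ccontr)
  assume "\<not> ?thesis"
  then have zero_row: "\<forall>j. A $ i $ j = 0" by auto
  obtain k where pos: "\<forall>i j. matrix_pow A k $ i $ j > 0"
    using assms(1) unfolding primitive_matrix_def by auto
  show False
  proof (cases k)
    case 0
    obtain j where "j \<noteq> i" using exists_other_index[OF assms(2)] by blast
    then have "matrix_pow A k $ i $ j = 0" using 0 by (simp add: mat_def)
    then show False using pos by (metis less_irrefl)
  next
    case (Suc k')
    have "matrix_pow A k $ i $ i = 0" using Suc zero_row by (simp add: matrix_matrix_mult_def)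
    then show False using pos by (metis less_irrefl)
  qed
qed

lemma unit_rows_pow:
  fixes A :: "real^'n^'n"
  assumes rows: "\<And>i. i \<in> S \<Longrightarrow> \<exists>j\<in>S. \<forall>l. A $ i $ l = (if l = j then 1 else 0)"
    and "i \<in> S"
  shows "\<exists>j\<in>S. \<forall>l. matrix_pow A k $ i $ l = (if l = j then 1 else 0)"
  using \<open>i \<in> S\<close>
proof (induction k arbitrary: i)
  case 0
  then show ?case by (auto simp: mat_def)
next
  case (Suc k)
  obtain j0 where j0: "j0 \<in> S" "\<forall>l. A $ i $ l = (if l = j0 then 1 else 0)"
    using rows Suc.prems by blast
  obtain j where j: "j \<in> S" "\<forall>l. matrix_pow A k $ j0 $ l = (if l = j then 1 else 0)"
    using Suc.IH[OF j0(1)] by blast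
  have "matrix_pow A (Suc k) $ i $ l = matrix_pow A k $ j0 $ l" for l
  proof -
    have "matrix_pow A (Suc k) $ i $ l = (\<Sum>p\<in>UNIV. A $ i $ p * matrix_pow A k $ p $ l)"
      by (simp add: matrix_matrix_mult_def)
    also have "\<dots> = (\<Sum>p\<in>UNIV. if p = j0 then matrix_pow A k $ p $ l else 0)"
      using j0(2) by (intro sum.cong) auto
    also have "\<dots> = matrix_pow A k $ j0 $ l" by simp
    finally show ?thesis .
  qed
  then show ?case using j by auto
qed

text \<open>Consequently a primitive matrix with at least two indices admits no nonempty
  set of indices closed under unit rows: such rows stay unit rows in every power,
  which therefore has zero entries.\<close>

lemma primitive_no_unit_row_closed_set:
  fixes A :: "real^'n^'n"
  assumes "primitive_matrix A" and "CARD('n) \<ge> 2"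
    and rows: "\<And>i. i \<in> S \<Longrightarrow> \<exists>j\<in>S. \<forall>l. A $ i $ l = (if l = j then 1 else 0)"
  shows "S = {}"
proof (rule ccontr)
  assume "S \<noteq> {}"
  then obtain i where "i \<in> S" by blast
  obtain k where pos: "\<forall>i j. matrix_pow A k $ i $ j > 0"
    using assms(1) unfolding primitive_matrix_def by auto
  obtain j where "\<forall>l. matrix_pow A k $ i $ l = (if l = j then 1 else 0)"
    using unit_rows_pow[OF rows \<open>i \<in> S\<close>] by blast
  moreover obtain l where "l \<noteq> j" using exists_other_index[OF assms(2)] by blast
  ultimately show False using pos by (metis less_irrefl)
qed

lemma zero_one_nonneg:
  fixes A :: "real^'n^'m"
  assumes "\<forall>i j. A $ i $ j \<in> {0, 1}"
  shows "\<forall>i j. A $ i $ j \<ge> 0"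
proof (intro allI)
  fix i j show "A $ i $ j \<ge> 0" using assms[rule_format, of i j] by auto
qed

lemma primitive_zero_one_row_has_one:
  fixes A :: "real^'n^'n"
  assumes "primitive_matrix A" and "CARD('n) \<ge> 2" and A01: "\<forall>i j. A $ i $ j \<in> {0, 1}"
  shows "\<exists>j. A $ i $ j = 1"
proof -
  obtain j where "A $ i $ j \<noteq> 0" using primitive_row_nonzero[OF assms(1,2)] by blast
  then have "A $ i $ j = 1" using A01[rule_format, of i j] by auto
  then show ?thesis ..
qed

lemma zero_one_row_ge_one:
  fixes A :: "real^'n^'m"
  assumes A01: "\<forall>i j. A $ i $ j \<in> {0, 1}" and "A $ i $ j = 1" and t: "\<forall>l. t $ l \<ge> 1"
  shows "t $ j \<le> (A *v t) $ i"
  using nonneg_matrix_vector_term_le[of A t i j] assms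
  by (metis dual_order.trans insert_iff mult_1 order.refl singletonD zero_le_one)

lemma zero_one_row_le_one:
  fixes A :: "real^'n^'m"
  assumes A01: "\<forall>i j. A $ i $ j \<in> {0, 1}" and j: "A $ i $ j = 1"
    and t: "\<forall>l. t $ l \<ge> 1" and le: "(A *v t) $ i \<le> 1"
  shows "t $ j = 1 \<and> (\<forall>l. A $ i $ l = (if l = j then 1 else 0))"
proof -
  have nonneg: "\<forall>i j. A $ i $ j \<ge> 0" using A01 by (rule zero_one_nonneg)
  have tj: "t $ j = 1"
    using zero_one_row_ge_one[OF A01 j t] t le by (metis antisym order.trans)
  have "A $ i $ l = 0" if "l \<noteq> j" for l
  proof -
    have "0 \<le> A $ i $ p * t $ p" for p
      using nonneg t by (meson mult_nonneg_nonneg order.trans zero_le_one)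
    then have "(\<Sum>p\<in>{j, l}. A $ i $ p * t $ p) \<le> (A *v t) $ i"
      unfolding matrix_vector_mult_def vec_lambda_beta by (intro sum_mono2) auto
    then have "A $ i $ l * t $ l \<le> 0" using that j tj le by simp
    then show ?thesis using A01[rule_format, of i l] t[rule_format, of l] by auto
  qed
  then show ?thesis using j tj by auto
qed

lemma zero_one_row_le:
  fixes A :: "real^'n^'m"
  assumes A01: "\<forall>i j. A $ i $ j \<in> {0, 1}" and t: "\<forall>l. 0 \<le> t $ l \<and> t $ l \<le> M"
  shows "(A *v t) $ i \<le> real CARD('n) * M"
proof -
  have "A $ i $ j * t $ j \<le> M" for j
    using A01[rule_format, of i j] t[rule_format, of j] by auto
  then have "(A *v t) $ i \<le> (\<Sum>j\<in>(UNIV::'n set). M)"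
    unfolding matrix_vector_mult_def vec_lambda_beta by (intro sum_mono) auto
  then show ?thesis by simp
qed

lemma zero_one_root_map_box:
  fixes A :: "real^'n^'n" and q M :: real
  defines "F \<equiv> \<lambda>t. \<chi> i. (A *v t) $ i powr (1 / q)"
  assumes A01: "\<forall>i j. A $ i $ j \<in> {0, 1}" and ones: "\<forall>i. \<exists>j. A $ i $ j = 1" and q: "q > 1"
    and M1: "M \<ge> 1" and Mq: "real CARD('n) * M \<le> M powr q"
  shows "mono_on {1..(\<chi> _. M)} F" and "F ` {1..(\<chi> _. M)} \<subseteq> {1..(\<chi> _. M)}"
proof -
  have nonneg: "\<forall>i j. A $ i $ j \<ge> 0" using A01 by (rule zero_one_nonneg)
  have box: "t \<in> {1..(\<chi> _. M)} \<longleftrightarrow> (\<forall>i. 1 \<le> t $ i \<and> t $ i \<le> M)" for t :: "real^'n"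
    by (auto simp: less_eq_vec_def)
  have row_ge_one: "1 \<le> (A *v t) $ i" if "\<forall>l. 1 \<le> t $ l" for t i
    using ones zero_one_row_ge_one[OF A01 _ that] that by (meson order.trans)
  show "mono_on {1..(\<chi> _. M)} F"
  proof (rule mono_onI)
    fix s t :: "real^'n" assume "s \<in> {1..(\<chi> _. M)}" "s \<le> t"
    then have "1 \<le> (A *v s) $ i" "(A *v s) $ i \<le> (A *v t) $ i" for i
      using row_ge_one nonneg_matrix_vector_mono[OF nonneg \<open>s \<le> t\<close>]
      by (auto simp: box less_eq_vec_def)
    then have "(A *v s) $ i powr (1 / q) \<le> (A *v t) $ i powr (1 / q)" for i
      using q by (intro powr_mono2) (auto intro: order.trans[OF zero_le_one])
    then show "F s \<le> F t" unfolding F_def less_eq_vec_def by simp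
  qed
  show "F ` {1..(\<chi> _. M)} \<subseteq> {1..(\<chi> _. M)}"
  proof safe
    fix t :: "real^'n" assume "t \<in> {1..(\<chi> _. M)}"
    then have t: "\<forall>l. 1 \<le> t $ l \<and> t $ l \<le> M" using box by blast
    have "F t $ i \<ge> 1" for i
      unfolding F_def using row_ge_one[of t i] t q by (auto intro: ge_one_powr_ge_zero)
    moreover have "F t $ i \<le> M" for i
    proof -
      have "\<forall>l. 0 \<le> t $ l \<and> t $ l \<le> M" using t by (meson order.trans zero_le_one)
      then have "(A *v t) $ i \<le> M powr q"
        using zero_one_row_le[OF A01] Mq by (meson order.trans)
      then have "(A *v t) $ i powr (1 / q) \<le> (M powr q) powr (1 / q)"
        using row_ge_one[of t i] t q by (intro powr_mono2) auto
      then show ?thesis unfolding F_def using q M1 by (simp add: powr_powr)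
    qed
    ultimately show "F t \<in> {1..(\<chi> _. M)}" using box by blast
  qed
qed

lemma zero_one_matrix_solution_ge_one:
  fixes A :: "real^'n^'n" and q :: real
  assumes A01: "\<forall>i j. A $ i $ j \<in> {0, 1}" and ones: "\<forall>i. \<exists>j. A $ i $ j = 1" and q: "q > 1"
  shows "\<exists>u. \<forall>i. 1 \<le> u $ i \<and> u $ i powr q = (A *v u) $ i"
proof -
  define m where "m = real CARD('n)"
  define M where "M = m powr (1 / (q - 1))"
  have m1: "m \<ge> 1" unfolding m_def by simp
  have M1: "M \<ge> 1" unfolding M_def using m1 q by (intro ge_one_powr_ge_zero) auto
  have "M powr (q - 1) = m" unfolding M_def using m1 q by (simp add: powr_powr)
  then have Mq: "M powr q = m * M" using powr_add[of M "q - 1" 1] M1 by simp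
  then have "real CARD('n) * M \<le> M powr q" by (simp add: m_def)
  note root_map = zero_one_root_map_box[OF A01 ones q M1 this]
  have "(1::real^'n) \<le> (\<chi> _. M)" using M1 by (simp add: less_eq_vec_def)
  from interval_monotone_fixpoint[OF root_map this]
  obtain u where "u \<in> {1..(\<chi> _. M)}" and fix_u: "(\<chi> i. (A *v u) $ i powr (1 / q)) = u"
    by auto
  then have u_ge: "\<forall>l. 1 \<le> u $ l" by (simp add: less_eq_vec_def)
  have "u $ i powr q = (A *v u) $ i" for i
  proof -
    have "u $ i powr q = ((A *v u) $ i powr (1 / q)) powr q"
      using fix_u by (metis vec_lambda_beta)
    also have "\<dots> = (A *v u) $ i"
    proof -
      obtain j where "A $ i $ j = 1" using ones by blast
      then have "1 \<le> (A *v u) $ i"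
        using zero_one_row_ge_one[OF A01 _ u_ge] u_ge by (meson order.trans)
      then show ?thesis using q by (simp add: powr_powr)
    qed
    finally show ?thesis .
  qed
  then show ?thesis using u_ge by (intro exI[of _ u]) auto
qed

text \<open>For a primitive 0/1 matrix with at least two indices, a solution with entries at
  least 1 has all entries strictly greater than 1: the indices where it equals 1
  would form a nonempty set closed under unit rows.\<close>

lemma primitive_solution_gt_one:
  fixes A :: "real^'n^'n" and q :: real
  assumes "CARD('n) \<ge> 2" and prim: "primitive_matrix A" and A01: "\<forall>i j. A $ i $ j \<in> {0, 1}"
    and u: "\<forall>i. 1 \<le> u $ i \<and> u $ i powr q = (A *v u) $ i"
  shows "u $ i > 1"
proof -
  define Z where "Z = {i. u $ i = 1}"
  have "\<exists>j\<in>Z. \<forall>l. A $ i $ l = (if l = j then 1 else 0)" if "i \<in> Z" for i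
  proof -
    obtain j where j: "A $ i $ j = 1"
      using primitive_zero_one_row_has_one[OF prim assms(1) A01] by blast
    have "(A *v u) $ i = u $ i powr q" using u by simp
    then have le: "(A *v u) $ i \<le> 1" using that unfolding Z_def by simp
    have u_ge: "\<forall>l. 1 \<le> u $ l" using u by blast
    show ?thesis
      using zero_one_row_le_one[OF A01 j u_ge le] unfolding Z_def by auto
  qed
  then have "Z = {}" by (rule primitive_no_unit_row_closed_set[OF prim assms(1)])
  then have "u $ i \<noteq> 1" unfolding Z_def by blast
  then show ?thesis using u[rule_format, of i] by (auto intro: le_neq_trans)
qed

text \<open>For a non-negative matrix and q > 1, any two positive solutions of t^q = A t are
  ordered both ways, via the maximal entrywise ratio.\<close>

lemma positive_solution_le:
  fixes A :: "real^'n^'n" and q :: real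
  assumes nonneg: "\<forall>i j. A $ i $ j \<ge> 0" and q: "q > 1"
    and s: "\<forall>i. s $ i > 0 \<and> s $ i powr q = (A *v s) $ i"
    and t: "\<forall>i. t $ i > 0 \<and> t $ i powr q = (A *v t) $ i"
  shows "s \<le> t"
proof -
  define c where "c = Max (range (\<lambda>i. s $ i / t $ i))"
  have ratio_le: "s $ j / t $ j \<le> c" for j unfolding c_def by (rule Max_ge) auto
  have s_le: "s $ j \<le> c * t $ j" for j
    using ratio_le[of j] t by (simp add: pos_divide_le_eq mult.commute)
  have "c \<in> range (\<lambda>i. s $ i / t $ i)" unfolding c_def by (rule Max_in) auto
  then obtain i0 where i0: "c = s $ i0 / t $ i0" by auto
  have t0: "t $ i0 > 0" and c_pos: "c > 0" using i0 s t by auto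
  have "s $ i0 = c * t $ i0" using i0 t0 by simp
  then have "c powr q * t $ i0 powr q = s $ i0 powr q" using c_pos t0 by (simp add: powr_mult)
  also have "\<dots> = (A *v s) $ i0" using s by blast
  also have "\<dots> \<le> (A *v (c *\<^sub>R t)) $ i0"
    using nonneg_matrix_vector_mono[OF nonneg, of s "c *\<^sub>R t"] s_le
    by (simp add: less_eq_vec_def)
  also have "\<dots> = c * t $ i0 powr q" using t by (simp add: matrix_vector_mult_scaleR)
  finally have "c powr q \<le> c" using t0 by simp
  have "c \<le> 1"
  proof (rule ccontr)
    assume "\<not> c \<le> 1"
    then have "c powr 1 < c powr q" using q by (intro powr_less_mono) auto
    then show False using \<open>c powr q \<le> c\<close> c_pos by simp
  qed
  have "s $ j \<le> t $ j" for j
  proof -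
    have "c * t $ j \<le> 1 * t $ j"
      using \<open>c \<le> 1\<close> t by (intro mult_right_mono) (auto simp: less_imp_le)
    then show ?thesis using s_le[of j] by simp
  qed
  then show "s \<le> t" unfolding less_eq_vec_def by blast
qed

theorem lemma1p2:
  fixes A :: "real^'n^'n" and q :: real
  assumes "CARD('n) \<ge> 2"
    and "primitive_matrix A"
    and "\<forall>i j. A $ i $ j \<in> {0, 1}"
    and "q > 1"
  shows "\<exists>!t :: real^'n. \<forall>i. t $ i powr q = (\<Sum>j\<in>UNIV. A $ i $ j * t $ j) \<and> t $ i > 1"
proof -
  have row_sum: "(\<Sum>j\<in>UNIV. A $ i $ j * t $ j) = (A *v t) $ i" for t :: "real^'n" and i
    by (simp add: matrix_vector_mult_def)
  have nonneg: "\<forall>i j. A $ i $ j \<ge> 0" using assms(2) unfolding primitive_matrix_def by blast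
  have ones: "\<forall>i. \<exists>j. A $ i $ j = 1"
    using primitive_zero_one_row_has_one[OF assms(2,1,3)] by blast
  obtain u where u: "\<forall>i. 1 \<le> u $ i \<and> u $ i powr q = (A *v u) $ i"
    using zero_one_matrix_solution_ge_one[OF assms(3) ones assms(4)] by blast
  have u_gt: "u $ i > 1" for i using primitive_solution_gt_one[OF assms(1-3) u] .
  have sol: "\<forall>i. u $ i powr q = (\<Sum>j\<in>UNIV. A $ i $ j * u $ j) \<and> u $ i > 1"
    using u u_gt by (simp add: row_sum)
  have u_pos: "\<forall>i. u $ i > 0 \<and> u $ i powr q = (A *v u) $ i"
    using u u_gt less_trans[OF zero_less_one] by blast
  show ?thesis
  proof (rule ex1I[of _ u])
    show "\<forall>i. u $ i powr q = (\<Sum>j\<in>UNIV. A $ i $ j * u $ j) \<and> u $ i > 1" by (rule sol)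
  next
    fix t assume "\<forall>i. t $ i powr q = (\<Sum>j\<in>UNIV. A $ i $ j * t $ j) \<and> t $ i > 1"
    then have t_pos: "\<forall>i. t $ i > 0 \<and> t $ i powr q = (A *v t) $ i"
      by (simp add: row_sum) (meson less_trans zero_less_one)
    show "t = u"
      using positive_solution_le[OF nonneg assms(4) t_pos u_pos]
        positive_solution_le[OF nonneg assms(4) u_pos t_pos]
      by (rule order.antisym)
  qed
qed

end
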